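(* Let $\mathcal{M}$ be a saturated model of Presburger arithmetic, $\mathcal{M}_0\preceq\mathcal{M}$ a small elementary submodel, $C\subseteq\mathcal{M}^n$ an open cell definable over $\mathcal{M}_0$, and $a\in C$ with $\dim(a/\mathcal{M}_0)=n$. Then there is an $n$-box $B$ around $a$ with $B\subseteq C$.
   Context: Presburger arithmetic is $\mathrm{Th}(\mathbb{Z},+,-,<,0,1,\{\equiv_n\}_n)$. Cells are defined inductively: a $0$-cell is a point of $\mathrm{dcl}(B)$; a $1$-cell is an infinite set $\{x:\alpha\ \square_1\ x\ \square_2\ \beta,\ x\equiv_N c\}$ with $\alpha,\beta\in\mathrm{dcl}(B)$, $0\le c<N$ integers, $\square_j$ either $\le$ or no condition; given an $(i_1,\dots,i_n)$-cell $C'$, an $(i_1,\dots,i_n,0)$-cell is the graph of a $B$-linear function on $C'$ and an $(i_1,\dots,i_n,1)$-cell is $\{(x,t):x\in C',\ \alpha(x)\ \square_1\ t\ \square_2\ \beta(x),\ t\equiv_N k\}$ with $\alpha,\beta$ $B$-linear on $C'$ and fiber sizes not uniformly bounded. Here a $B$-linear function is $f(x)=\sum_i s_i\frac{x_i-c_i}{k_i}+\gamma$ with integers $s_i,k_i$, $0\le c_i<k_i$, $x_i\equiv_{k_i}c_i$, $\gamma\in\mathrm{dcl}(B)$. The dimension of an $(i_1,\dots,i_n)$-cell is $\sum_j i_j$; a cell in $\mathcal{M}^n$ is open if its dimension is $n$. The dimension of a tuple over $\mathcal{M}_0$ is the size of a maximal dcl-independent (over $\mathcal{M}_0$) subset of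 its coordinates. A box around $p\in\mathcal{M}^n$ is a product $B_1\times\dots\times B_n$ of sets $B_i=\{x:\alpha_i\ \square_1\ x\ \square_2\ \beta_i,\ x\equiv_{N_i}c_i\}$ with $p_i\in B_i$ and $[\alpha_i,p_i]$, $[p_i,\beta_i]$ infinite. *)

theory Defs
  imports Main
begin

section \<open>First-order language of Presburger arithmetic (deep embedding)\<close>

text \<open>Terms and formulas in the language (+,-,<,0,1,{cong_n}_n); constants 'c are parameters.\<close>

datatype 'c tm = TVar nat | TCst 'c | TZero | TOne | TAdd "'c tm" "'c tm" | TSub "'c tm" "'c tm"

datatype 'c fm = FLess "'c tm" "'c tm" | FEq "'c tm" "'c tm" | FCong nat "'c tm" "'c tm"
  | FNeg "'c fm" | FConj "'c fm" "'c fm" | FEx nat "'c fm"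

fun fv_tm :: "'c tm \<Rightarrow> nat set" where
  "fv_tm (TVar n) = {n}"
| "fv_tm (TCst c) = {}"
| "fv_tm TZero = {}"
| "fv_tm TOne = {}"
| "fv_tm (TAdd s t) = fv_tm s \<union> fv_tm t"
| "fv_tm (TSub s t) = fv_tm s \<union> fv_tm t"

fun fv :: "'c fm \<Rightarrow> nat set" where
  "fv (FLess s t) = fv_tm s \<union> fv_tm t"
| "fv (FEq s t) = fv_tm s \<union> fv_tm t"
| "fv (FCong n s t) = fv_tm s \<union> fv_tm t"
| "fv (FNeg p) = fv p"
| "fv (FConj p q) = fv p \<union> fv q"
| "fv (FEx n p) = fv p - {n}"

text \<open>A structure for the language; its universe is the whole type 'a.\<close>

record 'a pstr =
  padd :: "'a \<Rightarrow> 'a \<Rightarrow> 'a"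
  psub :: "'a \<Rightarrow> 'a \<Rightarrow> 'a"
  pless :: "'a \<Rightarrow> 'a \<Rightarrow> bool"
  pzero :: 'a
  pone :: 'a
  pcong :: "nat \<Rightarrow> 'a \<Rightarrow> 'a \<Rightarrow> bool"

fun ev :: "'a pstr \<Rightarrow> ('c \<Rightarrow> 'a) \<Rightarrow> (nat \<Rightarrow> 'a) \<Rightarrow> 'c tm \<Rightarrow> 'a" where
  "ev S I v (TVar n) = v n"
| "ev S I v (TCst c) = I c"
| "ev S I v TZero = pzero S"
| "ev S I v TOne = pone S"
| "ev S I v (TAdd s t) = padd S (ev S I v s) (ev S I v t)"
| "ev S I v (TSub s t) = psub S (ev S I v s) (ev S I v t)"

text \<open>Satisfaction, quantifiers ranging over the domain D (D = UNIV for the model itself,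
  D = M0 for a substructure).\<close>

fun sat :: "'a pstr \<Rightarrow> 'a set \<Rightarrow> ('c \<Rightarrow> 'a) \<Rightarrow> (nat \<Rightarrow> 'a) \<Rightarrow> 'c fm \<Rightarrow> bool" where
  "sat S D I v (FLess s t) = pless S (ev S I v s) (ev S I v t)"
| "sat S D I v (FEq s t) = (ev S I v s = ev S I v t)"
| "sat S D I v (FCong n s t) = pcong S n (ev S I v s) (ev S I v t)"
| "sat S D I v (FNeg p) = (\<not> sat S D I v p)"
| "sat S D I v (FConj p q) = (sat S D I v p \<and> sat S D I v q)"
| "sat S D I v (FEx n p) = (\<exists>x\<in>D. sat S D I (v(n := x)) p)"

definition Zstr :: "int pstr" where
  "Zstr = \<lparr>padd = (+), psub = (-), pless = (<), pzero = 0, pone = 1,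
           pcong = (\<lambda>n x y. x mod int n = y mod int n)\<rparr>"

definition models_PrA :: "'a pstr \<Rightarrow> bool" where
  "models_PrA S \<longleftrightarrow> (\<forall>\<phi> :: nat fm. set_fm \<phi> = {} \<and> fv \<phi> = {} \<longrightarrow>
      (sat Zstr UNIV (\<lambda>_. 0) (\<lambda>_. 0) \<phi> \<longleftrightarrow> sat S UNIV (\<lambda>_. undefined) (\<lambda>_. undefined) \<phi>))"

text \<open>A is small: |A| < |M| (the universe of the model is UNIV :: 'a set).\<close>

definition small :: "'a set \<Rightarrow> bool" where
  "small A \<longleftrightarrow> \<not> (\<exists>f :: 'a \<Rightarrow> 'a. inj f \<and> range f \<subseteq> A)"

text \<open>Saturation (|M|-saturation): every finitely satisfiable set of formulas in one variable
  with parameters from a small set is realized.  A formula in the single variable x is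
  evaluated by assigning x to every variable.\<close>

definition saturated :: "'a pstr \<Rightarrow> bool" where
  "saturated S \<longleftrightarrow> (\<forall>A (\<Sigma> :: 'a fm set). small A \<and> (\<forall>\<phi>\<in>\<Sigma>. set_fm \<phi> \<subseteq> A) \<and>
      (\<forall>\<Sigma>0\<subseteq>\<Sigma>. finite \<Sigma>0 \<longrightarrow> (\<exists>x. \<forall>\<phi>\<in>\<Sigma>0. sat S UNIV id (\<lambda>_. x) \<phi>)) \<longrightarrow>
      (\<exists>x. \<forall>\<phi>\<in>\<Sigma>. sat S UNIV id (\<lambda>_. x) \<phi>))"

definition elem_sub :: "'a pstr \<Rightarrow> 'a set \<Rightarrow> bool" where
  "elem_sub S M0 \<longleftrightarrow> pzero S \<in> M0 \<and> pone S \<in> M0 \<and>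
     (\<forall>x\<in>M0. \<forall>y\<in>M0. padd S x y \<in> M0 \<and> psub S x y \<in> M0) \<and>
     (\<forall>(\<phi> :: 'a fm) v. set_fm \<phi> \<subseteq> M0 \<and> range v \<subseteq> M0 \<longrightarrow>
        (sat S M0 id v \<phi> \<longleftrightarrow> sat S UNIV id v \<phi>))"

definition dcl :: "'a pstr \<Rightarrow> 'a set \<Rightarrow> 'a set" where
  "dcl S B = {b. \<exists>\<phi> :: 'a fm. set_fm \<phi> \<subseteq> B \<and> (\<forall>x. sat S UNIV id (\<lambda>_. x) \<phi> \<longleftrightarrow> x = b)}"

fun nmul :: "'a pstr \<Rightarrow> nat \<Rightarrow> 'a \<Rightarrow> 'a" where
  "nmul S 0 x = pzero S"
| "nmul S (Suc n) x = padd S x (nmul S n x)"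

definition zmul :: "'a pstr \<Rightarrow> int \<Rightarrow> 'a \<Rightarrow> 'a" where
  "zmul S k x = (if 0 \<le> k then nmul S (nat k) x else psub S (pzero S) (nmul S (nat (- k)) x))"

definition const :: "'a pstr \<Rightarrow> nat \<Rightarrow> 'a" where
  "const S c = nmul S c (pone S)"

text \<open>y / k, the unique z with k z = y (used only when y is divisible by k).\<close>
definition divk :: "'a pstr \<Rightarrow> nat \<Rightarrow> 'a \<Rightarrow> 'a" where
  "divk S k y = (THE z. nmul S k z = y)"

definition ple :: "'a pstr \<Rightarrow> 'a \<Rightarrow> 'a \<Rightarrow> bool" where
  "ple S x y \<longleftrightarrow> pless S x y \<or> x = y"

text \<open>Optional bounds: None = no condition, Some a = the condition a \<le> t (resp. t \<le> a).\<close>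
definition lowok :: "'a pstr \<Rightarrow> 'a option \<Rightarrow> 'a \<Rightarrow> bool" where
  "lowok S lo t = (case lo of None \<Rightarrow> True | Some a \<Rightarrow> ple S a t)"

definition upok :: "'a pstr \<Rightarrow> 'a option \<Rightarrow> 'a \<Rightarrow> bool" where
  "upok S hi t = (case hi of None \<Rightarrow> True | Some b \<Rightarrow> ple S t b)"

section \<open>Cells\<close>

definition blin :: "'a pstr \<Rightarrow> 'a set \<Rightarrow> 'a list set \<Rightarrow> ('a list \<Rightarrow> 'a) \<Rightarrow> bool" where
  "blin S B C f \<longleftrightarrow> (\<exists>(s :: nat \<Rightarrow> int) (k :: nat \<Rightarrow> nat) (c :: nat \<Rightarrow> nat). \<exists>\<gamma>\<in>dcl S B.
     (\<forall>i. c i < k i) \<and>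
     (\<forall>x\<in>C. \<forall>i<length x. pcong S (k i) (x ! i) (const S (c i))) \<and>
     (\<forall>x\<in>C. f x = foldr (padd S)
        (map (\<lambda>i. zmul S (s i) (divk S (k i) (psub S (x ! i) (const S (c i))))) [0..<length x]) \<gamma>))"

text \<open>cell S B ty C: C is a ty-cell over B, where ty is the list (i_1,...,i_n) of 0s and 1s.\<close>

inductive cell :: "'a pstr \<Rightarrow> 'a set \<Rightarrow> nat list \<Rightarrow> 'a list set \<Rightarrow> bool" for S B where
  c0: "g \<in> dcl S B \<Longrightarrow> cell S B [0] {[g]}"
| c1: "(\<forall>a. lo = Some a \<longrightarrow> a \<in> dcl S B) \<Longrightarrow> (\<forall>b. hi = Some b \<longrightarrow> b \<in> dcl S B) \<Longrightarrow> c < N \<Longrightarrow>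
       X = {t. lowok S lo t \<and> upok S hi t \<and> pcong S N t (const S c)} \<Longrightarrow> infinite X \<Longrightarrow>
       cell S B [1] ((\<lambda>t. [t]) ` X)"
| cgraph: "cell S B ty C \<Longrightarrow> blin S B C f \<Longrightarrow> cell S B (ty @ [0]) ((\<lambda>x. x @ [f x]) ` C)"
| cint: "cell S B ty C \<Longrightarrow> (\<forall>a. lo = Some a \<longrightarrow> blin S B C a) \<Longrightarrow> (\<forall>b. hi = Some b \<longrightarrow> blin S B C b) \<Longrightarrow>
       c < N \<Longrightarrow>
       D = {y. \<exists>x\<in>C. \<exists>t. y = x @ [t] \<and> lowok S (map_option (\<lambda>a. a x) lo) t \<and>
                 upok S (map_option (\<lambda>b. b x) hi) t \<and> pcong S N t (const S c)} \<Longrightarrow>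
       \<not> (\<exists>m :: nat. \<forall>x\<in>C. finite {t. x @ [t] \<in> D} \<and> card {t. x @ [t] \<in> D} \<le> m) \<Longrightarrow>
       cell S B (ty @ [1]) D"

section \<open>Dimension of a tuple over M0\<close>

definition indep :: "'a pstr \<Rightarrow> 'a set \<Rightarrow> 'a list \<Rightarrow> nat set \<Rightarrow> bool" where
  "indep S M0 a I \<longleftrightarrow> (\<forall>i\<in>I. a ! i \<notin> dcl S (M0 \<union> (\<lambda>j. a ! j) ` (I - {i})))"

definition dimo :: "'a pstr \<Rightarrow> 'a set \<Rightarrow> 'a list \<Rightarrow> nat" where
  "dimo S M0 a = Max {card I | I. I \<subseteq> {..<length a} \<and> indep S M0 a I}"

section \<open>Boxes\<close>

definition bset :: "'a pstr \<Rightarrow> 'a option \<Rightarrow> 'a option \<Rightarrow> nat \<Rightarrow> nat \<Rightarrow> 'a set" where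
  "bset S lo hi N c = {x. lowok S lo x \<and> upok S hi x \<and> pcong S N x (const S c)}"

definition icc :: "'a pstr \<Rightarrow> 'a \<Rightarrow> 'a \<Rightarrow> 'a set" where
  "icc S a b = {x. ple S a x \<and> ple S x b}"

definition box :: "'a pstr \<Rightarrow> nat \<Rightarrow> 'a list \<Rightarrow> 'a list set \<Rightarrow> bool" where
  "box S n p X \<longleftrightarrow> length p = n \<and>
    (\<exists>(lo :: nat \<Rightarrow> 'a option) (hi :: nat \<Rightarrow> 'a option) (N :: nat \<Rightarrow> nat) (c :: nat \<Rightarrow> nat).
      (\<forall>i<n. c i < N i) \<and>
      X = {x. length x = n \<and> (\<forall>i<n. x ! i \<in> bset S (lo i) (hi i) (N i) (c i))} \<and>
      (\<forall>i<n. p ! i \<in> bset S (lo i) (hi i) (N i) (c i) \<and>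
         (\<forall>a. lo i = Some a \<longrightarrow> infinite (icc S a (p ! i))) \<and>
         (\<forall>b. hi i = Some b \<longrightarrow> infinite (icc S (p ! i) b))))"

end

theory Submission
  imports Defs
begin

text \<open>Every linear fact valid in \<open>\<int>\<close> holds in a model of Presburger arithmetic, and this
  transfer supplies all the arithmetic. Its key consequence is that an element \<open>t\<close> outside
  \<open>dcl(E)\<close> is infinitely far from every \<open>b \<in> dcl(E)\<close>: otherwise \<open>t = b \<plusminus> k\<close> for a standard
  \<open>k\<close>, making \<open>t\<close> definable. The box is built by induction on the cell. The last coordinate
  \<open>t\<close> of \<open>a = a' @ [t]\<close> is generic over \<open>M\<^sub>0 \<union> a'\<close>, so it is infinitely far from its bounds
  \<open>\<alpha>(a')\<close>, \<open>\<beta>(a')\<close>, which lie in \<open>dcl(M\<^sub>0 \<union> a')\<close>. The bounds are \<open>B\<close>-linear, hence Lipschitz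
  with a standard constant \<open>L\<close>. Dividing the smallest of these gaps (and of the gaps of the box
  around \<open>a'\<close> given by induction) by \<open>L + 1\<close> yields an infinite radius \<open>d\<close> such that the box of
  radius \<open>d\<close> around \<open>a\<close>, with the congruence conditions of the cell, lies in the cell.\<close>

section \<open>Derived connectives, coincidence and universal closure\<close>

definition FAll :: "nat \<Rightarrow> 'c fm \<Rightarrow> 'c fm" where "FAll n p = FNeg (FEx n (FNeg p))"
definition FImp :: "'c fm \<Rightarrow> 'c fm \<Rightarrow> 'c fm" where "FImp p q = FNeg (FConj p (FNeg q))"
definition FOr :: "'c fm \<Rightarrow> 'c fm \<Rightarrow> 'c fm" where "FOr p q = FNeg (FConj (FNeg p) (FNeg q))"
definition FLe :: "'c tm \<Rightarrow> 'c tm \<Rightarrow> 'c fm" where "FLe s t = FOr (FLess s t) (FEq s t)"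
definition FDisj :: "'c fm list \<Rightarrow> 'c fm" where
  "FDisj ps = foldr FOr ps (FNeg (FEq TZero TZero))"

lemma sat_derived [simp]:
  "sat S D I v (FAll n p) \<longleftrightarrow> (\<forall>x\<in>D. sat S D I (v(n := x)) p)"
  "sat S D I v (FImp p q) \<longleftrightarrow> (sat S D I v p \<longrightarrow> sat S D I v q)"
  "sat S D I v (FOr p q) \<longleftrightarrow> (sat S D I v p \<or> sat S D I v q)"
  "sat S D I v (FLe s t) \<longleftrightarrow> ple S (ev S I v s) (ev S I v t)"
  by (auto simp: FAll_def FImp_def FOr_def FLe_def ple_def)

lemma sat_FDisj [simp]: "sat S D I v (FDisj ps) \<longleftrightarrow> (\<exists>p\<in>set ps. sat S D I v p)"
  by (induction ps) (auto simp: FDisj_def)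

lemma set_fm_derived [simp]:
  "set_fm (FAll n p) = set_fm p" "set_fm (FImp p q) = set_fm p \<union> set_fm q"
  "set_fm (FOr p q) = set_fm p \<union> set_fm q" "set_fm (FLe s t) = set_tm s \<union> set_tm t"
  by (auto simp: FAll_def FImp_def FOr_def FLe_def)

lemma set_fm_FDisj [simp]: "set_fm (FDisj ps) = (\<Union>p\<in>set ps. set_fm p)"
  by (induction ps) (auto simp: FDisj_def)

lemma fv_FAll [simp]: "fv (FAll n p) = fv p - {n}"
  by (simp add: FAll_def)

fun nmul_tm :: "nat \<Rightarrow> 'c tm \<Rightarrow> 'c tm" where
  "nmul_tm 0 t = TZero"
| "nmul_tm (Suc n) t = TAdd t (nmul_tm n t)"

definition zmul_tm :: "int \<Rightarrow> 'c tm \<Rightarrow> 'c tm" where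
  "zmul_tm s t = (if 0 \<le> s then nmul_tm (nat s) t else TSub TZero (nmul_tm (nat (- s)) t))"

definition const_tm :: "nat \<Rightarrow> 'c tm" where "const_tm c = nmul_tm c TOne"

lemma ev_nmul_tm [simp]: "ev S I v (nmul_tm k t) = nmul S k (ev S I v t)"
  by (induction k) auto

lemma ev_zmul_tm [simp]: "ev S I v (zmul_tm s t) = zmul S s (ev S I v t)"
  by (simp add: zmul_tm_def zmul_def)

lemma ev_const_tm [simp]: "ev S I v (const_tm c) = const S c"
  by (simp add: const_tm_def const_def)

lemma set_tm_nmul_tm [simp]: "set_tm (nmul_tm k t) = (if k = 0 then {} else set_tm t)"
  by (induction k) auto

lemma set_tm_zmul_tm [simp]: "set_tm (zmul_tm s t) = (if s = 0 then {} else set_tm t)"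
  by (simp add: zmul_tm_def)

lemma set_tm_const_tm [simp]: "set_tm (const_tm c) = {}"
  by (simp add: const_tm_def)

lemma Zstr_simps [simp]:
  "padd Zstr = (+)" "psub Zstr = (-)" "pless Zstr = (<)" "pzero Zstr = 0" "pone Zstr = 1"
  "pcong Zstr = (\<lambda>n x y. x mod int n = y mod int n)" "ple Zstr = (\<le>)"
  by (auto simp: Zstr_def ple_def fun_eq_iff)

lemma nmul_Zstr [simp]: "nmul Zstr k x = int k * x"
  by (induction k) (auto simp: algebra_simps)

lemma zmul_Zstr [simp]: "zmul Zstr s x = s * x"
  by (simp add: zmul_def)

lemma const_Zstr [simp]: "const Zstr c = int c"
  by (simp add: const_def)

lemma finite_fv_tm: "finite (fv_tm t)"
  by (induction t) auto

lemma finite_fv: "finite (fv \<phi>)"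
  by (induction \<phi>) (auto simp: finite_fv_tm)

lemma ev_cong: "(\<forall>i\<in>fv_tm t. v i = v' i) \<Longrightarrow> ev S I v t = ev S I v' t"
  by (induction t) auto

lemma sat_cong: "(\<forall>i\<in>fv \<phi>. v i = v' i) \<Longrightarrow> sat S D I v \<phi> = sat S D I v' \<phi>"
proof (induction \<phi> arbitrary: v v')
  case (FLess s t)
  then show ?case using ev_cong[of s v v'] ev_cong[of t v v'] by simp
next
  case (FEq s t)
  then show ?case using ev_cong[of s v v'] ev_cong[of t v v'] by simp
next
  case (FCong n s t)
  then show ?case using ev_cong[of s v v'] ev_cong[of t v v'] by simp
next
  case (FNeg p)
  have "sat S D I v p = sat S D I v' p"
    by (rule FNeg.IH) (use FNeg.prems in simp)
  then show ?case by simp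
next
  case (FConj p q)
  have "sat S D I v p = sat S D I v' p" "sat S D I v q = sat S D I v' q"
    by (rule FConj.IH(1), use FConj.prems in simp, rule FConj.IH(2), use FConj.prems in simp)
  then show ?case by simp
next
  case (FEx n p)
  have "sat S D I (v(n := x)) p = sat S D I (v'(n := x)) p" for x
    using FEx by (intro FEx.IH) auto
  then show ?case by simp
qed

lemma sat_foldr_FAll:
  "sat S UNIV I v (foldr FAll xs \<phi>) \<longleftrightarrow> (\<forall>w. sat S UNIV I (override_on v w (set xs)) \<phi>)"
proof (induction xs arbitrary: v)
  case (Cons x xs)
  have absorb: "override_on (v(x := w x)) w (set xs) = override_on v w (set (x # xs))" for w
    by (auto simp: override_on_def)
  have extend: "override_on (v(x := y)) w (set xs) =
      override_on v (w(x := if x \<in> set xs then w x else y)) (set (x # xs))" for y w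
    by (auto simp: override_on_def)
  show ?case
    unfolding foldr.simps comp_def sat_derived Cons.IH
  proof (intro iffI allI ballI)
    fix w assume "\<forall>y\<in>UNIV. \<forall>w. sat S UNIV I (override_on (v(x := y)) w (set xs)) \<phi>"
    then show "sat S UNIV I (override_on v w (set (x # xs))) \<phi>" using absorb by (metis UNIV_I)
  next
    fix y w assume "\<forall>w. sat S UNIV I (override_on v w (set (x # xs))) \<phi>"
    then show "sat S UNIV I (override_on (v(x := y)) w (set xs)) \<phi>" using extend by metis
  qed
qed simp

lemma fv_foldr_FAll: "fv (foldr FAll xs \<phi>) = fv \<phi> - set xs"
  by (induction xs) auto

lemma set_fm_foldr_FAll: "set_fm (foldr FAll xs \<phi>) = set_fm \<phi>"
  by (induction xs) auto


section \<open>Definable closure\<close>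

fun rename_tm :: "(nat \<Rightarrow> nat) \<Rightarrow> 'c tm \<Rightarrow> 'c tm" where
  "rename_tm r (TVar i) = TVar (r i)"
| "rename_tm r (TCst c) = TCst c"
| "rename_tm r TZero = TZero"
| "rename_tm r TOne = TOne"
| "rename_tm r (TAdd s t) = TAdd (rename_tm r s) (rename_tm r t)"
| "rename_tm r (TSub s t) = TSub (rename_tm r s) (rename_tm r t)"

text \<open>Free variables are renamed by \<open>r\<close>; the variable bound by a quantifier \<open>FEx n\<close> becomes
  \<open>n + K\<close>, so a renaming into variables below \<open>K\<close> cannot be captured.\<close>

fun rename_fm :: "nat \<Rightarrow> (nat \<Rightarrow> nat) \<Rightarrow> 'c fm \<Rightarrow> 'c fm" where
  "rename_fm K r (FLess s t) = FLess (rename_tm r s) (rename_tm r t)"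
| "rename_fm K r (FEq s t) = FEq (rename_tm r s) (rename_tm r t)"
| "rename_fm K r (FCong n s t) = FCong n (rename_tm r s) (rename_tm r t)"
| "rename_fm K r (FNeg p) = FNeg (rename_fm K r p)"
| "rename_fm K r (FConj p q) = FConj (rename_fm K r p) (rename_fm K r q)"
| "rename_fm K r (FEx n p) = FEx (n + K) (rename_fm K (r(n := n + K)) p)"

lemma ev_rename_tm: "ev S I w (rename_tm r t) = ev S I (w \<circ> r) t"
  by (induction t) auto

lemma set_tm_rename_tm [simp]: "set_tm (rename_tm r t) = set_tm t"
  by (induction t) auto

lemma set_fm_rename_fm [simp]: "set_fm (rename_fm K r p) = set_fm p"
  by (induction p arbitrary: r) auto

lemma sat_rename_fm:
  "(\<forall>i. r i < K \<or> r i = i + K) \<Longrightarrow> sat S D I w (rename_fm K r p) = sat S D I (w \<circ> r) p"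
proof (induction p arbitrary: r w)
  case (FEx n p)
  have upd: "w(n + K := x) \<circ> r(n := n + K) = (w \<circ> r)(n := x)" for x
    using FEx.prems by (auto simp: fun_eq_iff) (metis add_right_cancel not_add_less2)
  have shifted: "\<forall>i. (r(n := n + K)) i < K \<or> (r(n := n + K)) i = i + K"
    using FEx.prems by auto
  show ?case by (simp only: rename_fm.simps sat.simps FEx.IH[OF shifted] upd)
qed (auto simp: ev_rename_tm)

lemma dcl_definable_image:
  assumes "b \<in> dcl S B" and "b' \<in> dcl S B" and "set_fm \<psi> \<subseteq> B"
    and "\<And>x. sat S UNIV id ((\<lambda>_. x)(1 := b, 2 := b')) \<psi> \<longleftrightarrow> x = y"
  shows "y \<in> dcl S B"
proof -
  obtain \<phi> where \<phi>: "set_fm \<phi> \<subseteq> B" "\<And>x. sat S UNIV id (\<lambda>_. x) \<phi> \<longleftrightarrow> x = b"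
    using assms(1) by (auto simp: dcl_def)
  obtain \<phi>' where \<phi>': "set_fm \<phi>' \<subseteq> B" "\<And>x. sat S UNIV id (\<lambda>_. x) \<phi>' \<longleftrightarrow> x = b'"
    using assms(2) by (auto simp: dcl_def)
  let ?\<chi> = "FEx 1 (FEx 2 (FConj (rename_fm 3 (\<lambda>_. 1) \<phi>) (FConj (rename_fm 3 (\<lambda>_. 2) \<phi>') \<psi>)))"
  have "sat S UNIV id (\<lambda>_. x) ?\<chi> \<longleftrightarrow> x = y" for x
    using \<phi>(2) \<phi>'(2) assms(4) by (simp add: sat_rename_fm comp_def)
  moreover have "set_fm ?\<chi> \<subseteq> B"
    using \<phi>(1) \<phi>'(1) assms(3) by simp
  ultimately show ?thesis
    unfolding dcl_def by blast
qed

lemma dcl_mono: "B \<subseteq> B' \<Longrightarrow> dcl S B \<subseteq> dcl S B'"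
  unfolding dcl_def by blast

lemma dcl_base: "b \<in> B \<Longrightarrow> b \<in> dcl S B"
  unfolding dcl_def by (intro CollectI exI[of _ "FEq (TVar 0) (TCst b)"]) auto

lemma dcl_const: "const S c \<in> dcl S B"
  unfolding dcl_def by (intro CollectI exI[of _ "FEq (TVar 0) (const_tm c)"]) auto

lemma dcl_add: "b1 \<in> dcl S B \<Longrightarrow> b2 \<in> dcl S B \<Longrightarrow> padd S b1 b2 \<in> dcl S B"
  by (rule dcl_definable_image[where \<psi> = "FEq (TVar 0) (TAdd (TVar 1) (TVar 2))"]) auto

lemma dcl_diff: "b1 \<in> dcl S B \<Longrightarrow> b2 \<in> dcl S B \<Longrightarrow> psub S b1 b2 \<in> dcl S B"
  by (rule dcl_definable_image[where \<psi> = "FEq (TVar 0) (TSub (TVar 1) (TVar 2))"]) auto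

lemma dcl_zmul: "b \<in> dcl S B \<Longrightarrow> zmul S s b \<in> dcl S B"
  by (rule dcl_definable_image[where b' = b and \<psi> = "FEq (TVar 0) (zmul_tm s (TVar 1))"]) auto

lemma dcl_foldr_add:
  "(\<forall>i\<in>set l. g i \<in> dcl S B) \<Longrightarrow> \<gamma> \<in> dcl S B \<Longrightarrow> foldr (padd S) (map g l) \<gamma> \<in> dcl S B"
  by (induction l) (auto intro: dcl_add)

section \<open>Far elements, balls and boxes\<close>

definition far :: "'a pstr \<Rightarrow> 'a \<Rightarrow> 'a \<Rightarrow> bool" where
  "far S u v \<longleftrightarrow> (\<forall>k. ple S (padd S u (const S k)) v)"

definition closed_ball :: "'a pstr \<Rightarrow> 'a \<Rightarrow> 'a \<Rightarrow> 'a set" where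
  "closed_ball S p r = icc S (psub S p r) (padd S p r)"

definition boxset :: "'a pstr \<Rightarrow> nat \<Rightarrow> (nat \<Rightarrow> 'a option) \<Rightarrow> (nat \<Rightarrow> 'a option) \<Rightarrow>
    (nat \<Rightarrow> nat) \<Rightarrow> (nat \<Rightarrow> nat) \<Rightarrow> 'a list set" where
  "boxset S n lo hi N c = {x. length x = n \<and> (\<forall>i<n. x ! i \<in> bset S (lo i) (hi i) (N i) (c i))}"

definition radius_box :: "'a pstr \<Rightarrow> 'a \<Rightarrow> 'a list \<Rightarrow> (nat \<Rightarrow> nat) \<Rightarrow> (nat \<Rightarrow> nat) \<Rightarrow> 'a list set" where
  "radius_box S d p N c =
     boxset S (length p) (\<lambda>i. Some (psub S (p ! i) d)) (\<lambda>i. Some (padd S (p ! i) d)) N c"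

definition lipschitz_at :: "'a pstr \<Rightarrow> 'a list set \<Rightarrow> 'a list \<Rightarrow> ('a list \<Rightarrow> 'a) \<Rightarrow> nat \<Rightarrow> bool" where
  "lipschitz_at S C p f L \<longleftrightarrow> (\<forall>x\<in>C. \<forall>d. (\<forall>i<length p. x ! i \<in> closed_ball S (p ! i) d) \<longrightarrow>
     f x \<in> closed_ball S (f p) (nmul S L d))"

lemma boxset_Suc:
  "boxset S (Suc m) (lo(m := l)) (hi(m := h)) (N(m := n)) (c(m := e)) =
     {x @ [s] |x s. x \<in> boxset S m lo hi N c \<and> s \<in> bset S l h n e}"
proof (intro set_eqI iffI)
  fix y assume y: "y \<in> boxset S (Suc m) (lo(m := l)) (hi(m := h)) (N(m := n)) (c(m := e))"
  then obtain x s where "y = x @ [s]" "length x = m"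
    by (auto simp: boxset_def length_Suc_conv_rev)
  with y show "y \<in> {x @ [s] |x s. x \<in> boxset S m lo hi N c \<and> s \<in> bset S l h n e}"
    by (auto simp: boxset_def All_less_Suc nth_append)
qed (auto simp: boxset_def All_less_Suc nth_append)

section \<open>Cells and independence\<close>

lemma cell_length: "cell S B ty C \<Longrightarrow> x \<in> C \<Longrightarrow> length x = length ty"
  by (induction arbitrary: x rule: cell.induct) auto

lemma cell_sum_le_length: "cell S B ty C \<Longrightarrow> sum_list ty \<le> length ty"
  by (induction rule: cell.induct) auto

lemma indep_of_dimo:
  assumes "dimo S M0 a = length a"
  shows "indep S M0 a {..<length a}"
proof -
  let ?F = "{card I |I. I \<subseteq> {..<length a} \<and> indep S M0 a I}"
  have "finite ?F"
    by (rule finite_surj[of "Pow {..<length a}" _ card]) auto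
  moreover have "0 \<in> ?F"
    by (rule CollectI, rule exI[of _ "{}"]) (simp add: indep_def)
  ultimately have "Max ?F \<in> ?F"
    by (intro Max_in) auto
  then obtain I where "card I = length a" "I \<subseteq> {..<length a}" "indep S M0 a I"
    using assms by (auto simp: dimo_def)
  then show ?thesis
    by (metis card_lessThan card_subset_eq finite_lessThan)
qed

lemma indep_snoc:
  assumes "indep S M0 (x @ [t]) {..<Suc (length x)}"
  shows "indep S M0 x {..<length x}" and "t \<notin> dcl S (M0 \<union> set x)"
proof -
  have "{..<Suc (length x)} - {length x} = {..<length x}"
    by auto
  then have "(\<lambda>j. (x @ [t]) ! j) ` ({..<Suc (length x)} - {length x}) = set x"
    by (force simp: nth_append in_set_conv_nth)
  then show "t \<notin> dcl S (M0 \<union> set x)"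
    using assms unfolding indep_def by (metis lessI lessThan_iff nth_append_length)
  show "indep S M0 x {..<length x}"
    unfolding indep_def
  proof
    fix i assume i: "i \<in> {..<length x}"
    have "(\<lambda>j. x ! j) ` ({..<length x} - {i}) \<subseteq> (\<lambda>j. (x @ [t]) ! j) ` ({..<Suc (length x)} - {i})"
      by (auto simp: nth_append image_iff)
    then have "dcl S (M0 \<union> (\<lambda>j. x ! j) ` ({..<length x} - {i})) \<subseteq>
        dcl S (M0 \<union> (\<lambda>j. (x @ [t]) ! j) ` ({..<Suc (length x)} - {i}))"
      by (intro dcl_mono) auto
    moreover have "(x @ [t]) ! i \<notin> dcl S (M0 \<union> (\<lambda>j. (x @ [t]) ! j) ` ({..<Suc (length x)} - {i}))"
      using assms i unfolding indep_def by auto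
    ultimately show "x ! i \<notin> dcl S (M0 \<union> (\<lambda>j. x ! j) ` ({..<length x} - {i}))"
      using i by (auto simp: nth_append)
  qed
qed

section \<open>Transfer from the integers\<close>

locale presburger_model =
  fixes S :: "'a pstr"
  assumes models: "models_PrA S"
begin

lemma transfer:
  fixes \<phi> :: "nat fm"
  assumes closed: "set_fm \<phi> = {}" and valid: "\<And>w. sat Zstr UNIV (\<lambda>_. 0) w \<phi>"
    and conclude: "sat S UNIV (\<lambda>_. undefined) v \<phi> \<Longrightarrow> P"
  shows P
proof -
  define \<psi> where "\<psi> = foldr FAll (sorted_list_of_set (fv \<phi>)) \<phi>"
  have sentence: "set_fm \<psi> = {}" "fv \<psi> = {}"
    using closed finite_fv[of \<phi>] by (simp_all add: \<psi>_def fv_foldr_FAll set_fm_foldr_FAll)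
  have "sat Zstr UNIV (\<lambda>_. 0) (\<lambda>_. 0) \<psi>"
    using valid finite_fv[of \<phi>] by (simp add: \<psi>_def sat_foldr_FAll)
  then have "sat S UNIV (\<lambda>_. undefined) (\<lambda>_. undefined) \<psi>"
    using models sentence unfolding models_PrA_def by blast
  then have "sat S UNIV (\<lambda>_. undefined) (override_on (\<lambda>_. undefined) v (fv \<phi>)) \<phi>"
    using finite_fv[of \<phi>] by (simp add: \<psi>_def sat_foldr_FAll)
  moreover have "sat S UNIV (\<lambda>_. undefined) (override_on (\<lambda>_. undefined) v (fv \<phi>)) \<phi> =
      sat S UNIV (\<lambda>_. undefined) v \<phi>"
    by (rule sat_cong) (auto simp: override_on_def)
  ultimately show P
    using conclude by simp
qed

text \<open>Each arithmetic fact below instantiates \<open>transfer\<close> with a formula and the valuation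
  \<open>nth [x\<^sub>0, x\<^sub>1, \<dots>]\<close>, which sends \<open>TVar i\<close> to \<open>x\<^sub>i\<close>; the fact \<open>Z\<close> is its validity in \<open>\<int>\<close>.\<close>

abbreviation add (infixl "\<oplus>" 65) where "x \<oplus> y \<equiv> padd S x y"
abbreviation sub (infixl "\<ominus>" 65) where "x \<ominus> y \<equiv> psub S x y"
abbreviation less (infix "\<prec>" 50) where "x \<prec> y \<equiv> pless S x y"
abbreviation le (infix "\<preceq>" 50) where "x \<preceq> y \<equiv> ple S x y"
abbreviation zero ("\<zero>") where "\<zero> \<equiv> pzero S"

lemma ple_refl: "x \<preceq> x"
  by (simp add: ple_def)

lemma ple_pless_trans: "x \<preceq> y \<Longrightarrow> y \<prec> z \<Longrightarrow> x \<prec> z"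
  by (rule transfer[of "FImp (FConj (FLe (TVar 0) (TVar 1)) (FLess (TVar 1) (TVar 2)))
        (FLess (TVar 0) (TVar 2))" "nth [x, y, z]"]) auto

lemma ple_or_pless: "x \<preceq> y \<or> y \<prec> x"
  by (rule transfer[of "FOr (FLe (TVar 0) (TVar 1)) (FLess (TVar 1) (TVar 0))" "nth [x, y]"]) auto

lemma pless_add_const_cases:
  assumes "e \<preceq> y" and "y \<prec> e \<oplus> const S k"
  shows "\<exists>j<k. y = e \<oplus> const S j"
proof -
  have Z: "(a::int) \<le> b \<Longrightarrow> b < a + int k \<Longrightarrow> \<exists>j\<in>{0..<k}. b = a + int j" for a b
    by (intro bexI[of _ "nat (b - a)"]) auto
  show ?thesis
    by (rule transfer[of "FImp (FConj (FLe (TVar 0) (TVar 1)) (FLess (TVar 1) (TAdd (TVar 0) (const_tm k))))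
        (FDisj (map (\<lambda>j. FEq (TVar 1) (TAdd (TVar 0) (const_tm j))) [0..<k]))" "nth [e, y]"])
      (use Z assms in auto)
qed

lemma inj_add_const: "inj (\<lambda>k. u \<oplus> const S k)"
proof (rule injI, rule ccontr)
  fix j k assume eq: "u \<oplus> const S j = u \<oplus> const S k" and ne: "j \<noteq> k"
  show False
    by (rule transfer[of "FNeg (FEq (TAdd (TVar 0) (const_tm j)) (TAdd (TVar 0) (const_tm k)))" "nth [u]"])
      (use eq ne in simp_all)
qed

lemma ple_add_const: "u \<preceq> u \<oplus> const S k"
  by (rule transfer[of "FLe (TVar 0) (TAdd (TVar 0) (const_tm k))" "nth [u]"]) auto

lemma add_const_ple_imp_ple: "u \<oplus> const S k \<preceq> v \<Longrightarrow> u \<preceq> v"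
  by (rule transfer[of "FImp (FLe (TAdd (TVar 0) (const_tm k)) (TVar 1)) (FLe (TVar 0) (TVar 1))"
        "nth [u, v]"]) auto

lemma add_const_diff_const: "(t \<oplus> const S k) \<ominus> const S k = t"
  by (rule transfer[of "FEq (TSub (TAdd (TVar 0) (const_tm k)) (const_tm k)) (TVar 0)" "nth [t]"]) auto

lemma add_const_ple_diff: "u \<oplus> const S k \<preceq> v \<Longrightarrow> \<zero> \<oplus> const S k \<preceq> v \<ominus> u"
  by (rule transfer[of "FImp (FLe (TAdd (TVar 0) (const_tm k)) (TVar 1))
        (FLe (TAdd TZero (const_tm k)) (TSub (TVar 1) (TVar 0)))" "nth [u, v]"]) auto

lemma add_diff_ple: "u \<oplus> (v \<ominus> u) \<preceq> v"
  by (rule transfer[of "FLe (TAdd (TVar 0) (TSub (TVar 1) (TVar 0))) (TVar 1)" "nth [u, v]"]) auto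

lemma add_ple_antimono: "g \<preceq> g' \<Longrightarrow> u \<oplus> g' \<preceq> v \<Longrightarrow> u \<oplus> g \<preceq> v"
  by (rule transfer[of "FImp (FConj (FLe (TVar 0) (TVar 1)) (FLe (TAdd (TVar 2) (TVar 1)) (TVar 3)))
        (FLe (TAdd (TVar 2) (TVar 0)) (TVar 3))" "nth [g, g', u, v]"]) auto

lemma nmul_quotient: "0 < N \<Longrightarrow> \<exists>q. nmul S N q \<preceq> g \<and> g \<prec> nmul S N (q \<oplus> pone S)"
proof -
  assume N: "0 < N"
  have Z: "\<exists>q. int N * q \<le> b \<and> b < int N * (q + 1)" for b
  proof -
    have "int N * (b div int N) + b mod int N = b" "b mod int N < int N" "0 \<le> b mod int N"
      using N by simp_all
    then show ?thesis
      unfolding distrib_left by (intro exI[of _ "b div int N"]) linarith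
  qed
  show ?thesis
    by (rule transfer[of "FEx 1 (FConj (FLe (nmul_tm N (TVar 1)) (TVar 0))
        (FLess (TVar 0) (nmul_tm N (TAdd (TVar 1) TOne))))" "nth [g]"]) (use Z in auto)
qed

lemma nmul_quotient_lower:
  "g \<prec> nmul S N (q \<oplus> pone S) \<Longrightarrow> \<zero> \<oplus> const S (N * k) \<preceq> g \<Longrightarrow> \<zero> \<oplus> const S k \<preceq> q"
proof -
  have Z: "int k \<le> a" if "b < int N * (a + 1)" and "int N * int k \<le> b" for a b
  proof -
    have "int N * int k < int N * (a + 1)" using that by linarith
    then show ?thesis by (simp add: mult_less_cancel_left)
  qed
  show "g \<prec> nmul S N (q \<oplus> pone S) \<Longrightarrow> \<zero> \<oplus> const S (N * k) \<preceq> g \<Longrightarrow> \<zero> \<oplus> const S k \<preceq> q"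
    by (rule transfer[of "FImp (FConj (FLess (TVar 0) (nmul_tm N (TAdd (TVar 1) TOne)))
        (FLe (TAdd TZero (const_tm (N * k))) (TVar 0))) (FLe (TAdd TZero (const_tm k)) (TVar 1))" "nth [g, q]"])
      (use Z in auto)
qed

lemma center_in_closed_ball: "\<zero> \<preceq> r \<Longrightarrow> p \<in> closed_ball S p r"
  unfolding closed_ball_def icc_def
  by (rule transfer[of "FImp (FLe TZero (TVar 1))
        (FConj (FLe (TSub (TVar 0) (TVar 1)) (TVar 0)) (FLe (TVar 0) (TAdd (TVar 0) (TVar 1))))"
        "nth [p, r]"]) auto

lemma far_radius_ends:
  "\<zero> \<oplus> const S k \<preceq> d \<Longrightarrow> (p \<ominus> d) \<oplus> const S k \<preceq> p \<and> p \<oplus> const S k \<preceq> p \<oplus> d"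
  by (rule transfer[of "FImp (FLe (TAdd TZero (const_tm k)) (TVar 1))
        (FConj (FLe (TAdd (TSub (TVar 0) (TVar 1)) (const_tm k)) (TVar 0))
          (FLe (TAdd (TVar 0) (const_tm k)) (TAdd (TVar 0) (TVar 1))))" "nth [p, d]"]) auto

lemma closed_ball_add:
  "u \<in> closed_ball S v e \<Longrightarrow> u' \<in> closed_ball S v' e' \<Longrightarrow>
     u \<oplus> u' \<in> closed_ball S (v \<oplus> v') (e \<oplus> e')"
  unfolding closed_ball_def icc_def
  by (rule transfer[of "FImp (FConj
      (FConj (FLe (TSub (TVar 1) (TVar 2)) (TVar 0)) (FLe (TVar 0) (TAdd (TVar 1) (TVar 2))))
      (FConj (FLe (TSub (TVar 4) (TVar 5)) (TVar 3)) (FLe (TVar 3) (TAdd (TVar 4) (TVar 5)))))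
    (FConj (FLe (TSub (TAdd (TVar 1) (TVar 4)) (TAdd (TVar 2) (TVar 5))) (TAdd (TVar 0) (TVar 3)))
      (FLe (TAdd (TVar 0) (TVar 3)) (TAdd (TAdd (TVar 1) (TVar 4)) (TAdd (TVar 2) (TVar 5)))))"
    "nth [u, v, e, u', v', e']"]) auto

lemma nmul_add: "nmul S (a + b) x = nmul S a x \<oplus> nmul S b x"
  by (rule transfer[of "FEq (nmul_tm (a + b) (TVar 0)) (TAdd (nmul_tm a (TVar 0)) (nmul_tm b (TVar 0)))" "nth [x]"])
    (auto simp: algebra_simps)

lemma nmul_inject: "0 < k \<Longrightarrow> nmul S k x = nmul S k y \<Longrightarrow> x = y"
  by (rule transfer[of "FImp (FEq (nmul_tm k (TVar 0)) (nmul_tm k (TVar 1))) (FEq (TVar 0) (TVar 1))"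
        "nth [x, y]"]) auto

lemma pcong_imp_nmul: "pcong S k x (const S c) \<Longrightarrow> \<exists>w. nmul S k w = x \<ominus> const S c"
proof -
  have Z: "b mod int k = int c mod int k \<Longrightarrow> \<exists>w. int k * w = b - int c" for b
    by (metis dvd_def mod_eq_dvd_iff)
  show "pcong S k x (const S c) \<Longrightarrow> \<exists>w. nmul S k w = x \<ominus> const S c"
    by (rule transfer[of "FImp (FCong k (TVar 0) (const_tm c)) (FEx 1 (FEq (nmul_tm k (TVar 1)) (TSub (TVar 0) (const_tm c))))"
        "nth [x]"]) (use Z in auto)
qed

lemma add_zero_right: "x \<oplus> \<zero> = x"
  by (rule transfer[of "FEq (TAdd (TVar 0) TZero) (TVar 0)" "nth [x]"]) auto

lemma diff_zero_right: "x \<ominus> \<zero> = x"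
  by (rule transfer[of "FEq (TSub (TVar 0) TZero) (TVar 0)" "nth [x]"]) auto

lemma zmul_quotient_closed_ball:
  assumes "0 < k" and "nmul S k w = x \<ominus> c" and "nmul S k z = y \<ominus> c" and "x \<in> closed_ball S y d"
  shows "zmul S s w \<in> closed_ball S (zmul S s z) (nmul S (nat \<bar>s\<bar>) d)"
proof -
  have Z: "s * z' - \<bar>s\<bar> * d' \<le> s * w' \<and> s * w' \<le> s * z' + \<bar>s\<bar> * d'"
    if "int k * w' = x' - c'" "int k * z' = y' - c'" "y' - d' \<le> x'" "x' \<le> y' + d'" for w' z' x' y' c' d'
  proof -
    have "\<bar>w' - z'\<bar> \<le> \<bar>int k * (w' - z')\<bar>"
      using assms(1) by (simp add: abs_mult mult_le_cancel_right1)
    also have "\<dots> \<le> d'"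
      using that by (simp add: algebra_simps abs_le_iff)
    finally have "\<bar>w' - z'\<bar> \<le> d'" .
    then have "\<bar>s\<bar> * \<bar>w' - z'\<bar> \<le> \<bar>s\<bar> * d'"
      by (simp add: mult_left_mono)
    moreover have "\<bar>s * w' - s * z'\<bar> = \<bar>s\<bar> * \<bar>w' - z'\<bar>"
      by (simp add: abs_mult[symmetric] right_diff_distrib)
    ultimately have "\<bar>s * w' - s * z'\<bar> \<le> \<bar>s\<bar> * d'"
      by simp
    then show ?thesis
      unfolding abs_le_iff by linarith
  qed
  show ?thesis
    unfolding closed_ball_def icc_def
    by (rule transfer[of "FImp
        (FConj (FEq (nmul_tm k (TVar 0)) (TSub (TVar 2) (TVar 4)))
          (FConj (FEq (nmul_tm k (TVar 1)) (TSub (TVar 3) (TVar 4)))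
            (FConj (FLe (TSub (TVar 3) (TVar 5)) (TVar 2)) (FLe (TVar 2) (TAdd (TVar 3) (TVar 5))))))
        (FConj (FLe (TSub (zmul_tm s (TVar 1)) (nmul_tm (nat \<bar>s\<bar>) (TVar 5))) (zmul_tm s (TVar 0)))
          (FLe (zmul_tm s (TVar 0)) (TAdd (zmul_tm s (TVar 1)) (nmul_tm (nat \<bar>s\<bar>) (TVar 5)))))"
        "nth [w, z, x, y, c, d]"]) (use Z assms(2-4) in \<open>auto simp: closed_ball_def icc_def\<close>)
qed

text \<open>The facts \<open>Z\<close> of the next two lemmas are stated in the simp normal form of the
  transferred formula.\<close>

lemma below_gap:
  assumes "\<zero> \<preceq> d" and "u \<oplus> nmul S (Suc (L + L')) d \<preceq> t" and "w \<preceq> u \<oplus> nmul S L d" and "t \<ominus> d \<preceq> s"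
  shows "w \<preceq> s"
proof -
  have Z: "w' \<le> s'" if "0 \<le> d'" and "u' + (d' + (int L + int L') * d') \<le> t'"
    and "w' \<le> u' + int L * d'" and "t' - d' \<le> s'" for u' t' w' s' d' :: int
  proof -
    have "0 \<le> int L' * d'"
      using that(1) by simp
    then show ?thesis
      using that unfolding distrib_right by linarith
  qed
  show ?thesis
    by (rule transfer[of "FImp (FConj (FLe TZero (TVar 4)) (FConj
          (FLe (TAdd (TVar 0) (nmul_tm (Suc (L + L')) (TVar 4))) (TVar 1))
          (FConj (FLe (TVar 2) (TAdd (TVar 0) (nmul_tm L (TVar 4)))) (FLe (TSub (TVar 1) (TVar 4)) (TVar 3)))))
        (FLe (TVar 2) (TVar 3))" "nth [u, t, w, s, d]"]) (use assms in simp_all, use Z in blast)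
qed

lemma above_gap:
  assumes "\<zero> \<preceq> d" and "t \<oplus> nmul S (Suc (L + L')) d \<preceq> u" and "u \<ominus> nmul S L d \<preceq> w" and "s \<preceq> t \<oplus> d"
  shows "s \<preceq> w"
proof -
  have Z: "s' \<le> w'" if "0 \<le> d'" and "t' + (d' + (int L + int L') * d') \<le> u'"
    and "u' - int L * d' \<le> w'" and "s' \<le> t' + d'" for u' t' w' s' d' :: int
  proof -
    have "0 \<le> int L' * d'"
      using that(1) by simp
    then show ?thesis
      using that unfolding distrib_right by linarith
  qed
  show ?thesis
    by (rule transfer[of "FImp (FConj (FLe TZero (TVar 4)) (FConj
          (FLe (TAdd (TVar 1) (nmul_tm (Suc (L + L')) (TVar 4))) (TVar 0))
          (FConj (FLe (TSub (TVar 0) (nmul_tm L (TVar 4))) (TVar 2)) (FLe (TVar 3) (TAdd (TVar 1) (TVar 4))))))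
        (FLe (TVar 3) (TVar 2))" "nth [u, t, w, s, d]"]) (use assms in simp_all, use Z in blast)
qed

section \<open>Generic elements and radii\<close>

lemma dcl_nmul_cancel: "0 < k \<Longrightarrow> nmul S k w \<in> dcl S B \<Longrightarrow> w \<in> dcl S B"
  by (rule dcl_definable_image[where b' = "nmul S k w" and \<psi> = "FEq (nmul_tm k (TVar 0)) (TVar 1)"])
    (auto dest: nmul_inject)

lemma infinite_icc_iff_far: "infinite (icc S u v) \<longleftrightarrow> far S u v"
proof
  assume infinite: "infinite (icc S u v)"
  show "far S u v"
    unfolding far_def
  proof (rule allI, rule ccontr)
    fix k assume "\<not> u \<oplus> const S k \<preceq> v"
    then have "v \<prec> u \<oplus> const S k"
      using ple_or_pless by blast
    then have "icc S u v \<subseteq> (\<lambda>j. u \<oplus> const S j) ` {..<k}"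
      using pless_add_const_cases ple_pless_trans by (fastforce simp: icc_def)
    then show False
      using infinite finite_surj by blast
  qed
next
  assume "far S u v"
  then have "range (\<lambda>k. u \<oplus> const S k) \<subseteq> icc S u v"
    using ple_add_const by (auto simp: far_def icc_def)
  then show "infinite (icc S u v)"
    using inj_add_const finite_imageD infinite_UNIV_nat finite_subset by metis
qed

lemma far_imp_ple: "far S u v \<Longrightarrow> u \<preceq> v"
  using add_const_ple_imp_ple by (auto simp: far_def)

lemma far_zero_diff: "far S u v \<Longrightarrow> far S \<zero> (v \<ominus> u)"
  using add_const_ple_diff by (auto simp: far_def)

lemma far_above_dcl:
  assumes "b \<in> dcl S E" and "t \<notin> dcl S E" and "b \<preceq> t"
  shows "far S b t"
  unfolding far_def
proof (rule allI, rule ccontr)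
  fix k assume "\<not> b \<oplus> const S k \<preceq> t"
  then obtain j where "t = b \<oplus> const S j"
    using pless_add_const_cases assms(3) ple_or_pless by blast
  then show False
    using assms(1,2) dcl_add dcl_const by metis
qed

lemma far_below_dcl:
  assumes "b \<in> dcl S E" and "t \<notin> dcl S E" and "t \<preceq> b"
  shows "far S t b"
  unfolding far_def
proof (rule allI, rule ccontr)
  fix k assume "\<not> t \<oplus> const S k \<preceq> b"
  then obtain j where "b = t \<oplus> const S j"
    using pless_add_const_cases assms(3) ple_or_pless by blast
  then have "t = b \<ominus> const S j"
    by (simp add: add_const_diff_const)
  then show False
    using assms(1,2) dcl_diff dcl_const by metis
qed

lemma exists_common_gap:
  assumes "finite P" and "P \<noteq> {}" and "\<forall>(u, v)\<in>P. far S u v"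
  shows "\<exists>g. far S \<zero> g \<and> (\<forall>(u, v)\<in>P. u \<oplus> g \<preceq> v)"
  using assms
proof (induction P rule: finite_ne_induct)
  case (singleton p)
  obtain u v where "p = (u, v)"
    by fastforce
  then show ?case
    using singleton far_zero_diff add_diff_ple by blast
next
  case (insert p P)
  obtain g where g: "far S \<zero> g" "\<forall>(u, v)\<in>P. u \<oplus> g \<preceq> v"
    using insert by auto
  obtain u v where p: "p = (u, v)"
    by fastforce
  have gap: "far S \<zero> (v \<ominus> u)" "u \<oplus> (v \<ominus> u) \<preceq> v"
    using insert.prems p far_zero_diff add_diff_ple by auto
  show ?case
  proof (cases "g \<preceq> v \<ominus> u")
    case True
    then show ?thesis
      using g gap(2) p add_ple_antimono by auto
  next
    case False
    then have "v \<ominus> u \<preceq> g"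
      using ple_or_pless by (auto simp: ple_def)
    then show ?thesis
      using g gap p add_ple_antimono by fastforce
  qed
qed

lemma exists_far_fraction:
  assumes "0 < N" and "far S \<zero> g"
  shows "\<exists>d. far S \<zero> d \<and> nmul S N d \<preceq> g"
proof -
  obtain q where q: "nmul S N q \<preceq> g" "g \<prec> nmul S N (q \<oplus> pone S)"
    using nmul_quotient assms(1) by blast
  have "far S \<zero> q"
    using nmul_quotient_lower[OF q(2)] assms(2) by (auto simp: far_def)
  then show ?thesis
    using q(1) by blast
qed

lemma exists_radius:
  assumes "finite P" and "P \<noteq> {}" and "\<forall>(u, v)\<in>P. far S u v" and "0 < N"
  shows "\<exists>d. far S \<zero> d \<and> (\<forall>(u, v)\<in>P. u \<oplus> nmul S N d \<preceq> v)"
proof -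
  obtain g where g: "far S \<zero> g" "\<forall>(u, v)\<in>P. u \<oplus> g \<preceq> v"
    using exists_common_gap assms(1-3) by blast
  obtain d where "far S \<zero> d" "nmul S N d \<preceq> g"
    using exists_far_fraction assms(4) g(1) by blast
  then show ?thesis
    using g(2) add_ple_antimono by fast
qed

lemma box_iff_far:
  "box S n p X \<longleftrightarrow> length p = n \<and> (\<exists>lo hi N c. X = boxset S n lo hi N c \<and>
     (\<forall>i<n. c i < N i \<and> p ! i \<in> bset S (lo i) (hi i) (N i) (c i) \<and>
        (\<forall>e. lo i = Some e \<longrightarrow> far S e (p ! i)) \<and> (\<forall>e. hi i = Some e \<longrightarrow> far S (p ! i) e)))"
  unfolding box_def boxset_def infinite_icc_iff_far by blast

lemma box_Nil: "box S 0 [] {[]}"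
  by (auto simp: box_def)

lemma box_snoc:
  assumes "box S m p X" and "c < N" and "t \<in> bset S lo hi N c"
    and "\<forall>e. lo = Some e \<longrightarrow> far S e t" and "\<forall>e. hi = Some e \<longrightarrow> far S t e"
  shows "box S (Suc m) (p @ [t]) {x @ [s] |x s. x \<in> X \<and> s \<in> bset S lo hi N c}"
proof -
  obtain lo' hi' N' c' where p: "length p = m" and X: "X = boxset S m lo' hi' N' c'"
    and sides: "\<forall>i<m. c' i < N' i \<and> p ! i \<in> bset S (lo' i) (hi' i) (N' i) (c' i) \<and>
        (\<forall>e. lo' i = Some e \<longrightarrow> far S e (p ! i)) \<and> (\<forall>e. hi' i = Some e \<longrightarrow> far S (p ! i) e)"
    using assms(1) unfolding box_iff_far by blast
  show ?thesis
    unfolding box_iff_far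
    using p sides assms(2-5)
    by (intro conjI exI[of _ "lo'(m := lo)"] exI[of _ "hi'(m := hi)"] exI[of _ "N'(m := N)"]
        exI[of _ "c'(m := c)"]) (auto simp: X boxset_Suc All_less_Suc nth_append)
qed

lemma far_radius:
  assumes "far S \<zero> d"
  shows "t \<in> closed_ball S t d" and "far S (t \<ominus> d) t" and "far S t (t \<oplus> d)"
  using center_in_closed_ball far_imp_ple far_radius_ends assms by (auto simp: far_def)

lemma box_radius_box:
  assumes "far S \<zero> d" and "\<forall>i<length p. c i < N i \<and> pcong S (N i) (p ! i) (const S (c i))"
  shows "box S (length p) p (radius_box S d p N c)"
  unfolding box_iff_far radius_box_def
  using far_radius[OF assms(1)] assms(2)
  by (intro conjI exI[of _ "\<lambda>i. Some (p ! i \<ominus> d)"] exI[of _ "\<lambda>i. Some (p ! i \<oplus> d)"] exI[of _ N]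
      exI[of _ c] refl) (auto simp: bset_def lowok_def upok_def closed_ball_def icc_def)

lemma mem_radius_box:
  "x \<in> radius_box S d p N c \<longleftrightarrow> length x = length p \<and>
     (\<forall>i<length p. x ! i \<in> closed_ball S (p ! i) d \<and> pcong S (N i) (x ! i) (const S (c i)))"
  by (auto simp: radius_box_def boxset_def bset_def lowok_def upok_def closed_ball_def icc_def)

lemma radius_box_subset_boxset:
  assumes "far S \<zero> d" and "length p = m"
    and "\<forall>i<m. \<forall>e. lo i = Some e \<longrightarrow> e \<oplus> nmul S (Suc L) d \<preceq> p ! i"
    and "\<forall>i<m. \<forall>e. hi i = Some e \<longrightarrow> p ! i \<oplus> nmul S (Suc L) d \<preceq> e"
  shows "radius_box S d p N c \<subseteq> boxset S m lo hi N c"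
proof
  fix x assume x: "x \<in> radius_box S d p N c"
  have d: "\<zero> \<preceq> d"
    using far_imp_ple assms(1) .
  have "x ! i \<in> bset S (lo i) (hi i) (N i) (c i)" if i: "i < m" for i
  proof -
    have near: "p ! i \<ominus> d \<preceq> x ! i" "x ! i \<preceq> p ! i \<oplus> d" "pcong S (N i) (x ! i) (const S (c i))"
      using x i assms(2) by (auto simp: mem_radius_box closed_ball_def icc_def)
    have "e \<preceq> x ! i" if "lo i = Some e" for e
      using below_gap[OF d, where u = e and L = 0 and L' = L and t = "p ! i" and w = e and s = "x ! i"]
        assms(3) i that near by (simp add: add_zero_right ple_refl)
    moreover have "x ! i \<preceq> e" if "hi i = Some e" for e
      using above_gap[OF d, where u = e and L = 0 and L' = L and t = "p ! i" and w = e and s = "x ! i"]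
        assms(4) i that near by (simp add: diff_zero_right ple_refl)
    ultimately show ?thesis
      using near(3) by (auto simp: bset_def lowok_def upok_def split: option.split)
  qed
  then show "x \<in> boxset S m lo hi N c"
    using x assms(2) by (auto simp: mem_radius_box boxset_def bset_def)
qed

lemma box_shrink:
  assumes "box S m p X" and "finite Q" and "Q \<noteq> {}" and "\<forall>(u, v)\<in>Q. far S u v"
  shows "\<exists>d N c. far S \<zero> d \<and> (\<forall>(u, v)\<in>Q. u \<oplus> nmul S (Suc L) d \<preceq> v) \<and>
    box S m p (radius_box S d p N c) \<and> radius_box S d p N c \<subseteq> X"
proof -
  obtain lo hi N c where p: "length p = m" and X: "X = boxset S m lo hi N c"
    and sides: "\<forall>i<m. c i < N i \<and> p ! i \<in> bset S (lo i) (hi i) (N i) (c i) \<and>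
        (\<forall>e. lo i = Some e \<longrightarrow> far S e (p ! i)) \<and> (\<forall>e. hi i = Some e \<longrightarrow> far S (p ! i) e)"
    using assms(1) unfolding box_iff_far by blast
  define P where "P = Q \<union> {(e, p ! i) |e i. i < m \<and> lo i = Some e} \<union> {(p ! i, e) |e i. i < m \<and> hi i = Some e}"
  have "finite {(e, p ! i) |e i. i < m \<and> lo i = Some e}"
    by (rule finite_subset[of _ "(\<lambda>i. (the (lo i), p ! i)) ` {..<m}"]) force+
  moreover have "finite {(p ! i, e) |e i. i < m \<and> hi i = Some e}"
    by (rule finite_subset[of _ "(\<lambda>i. (p ! i, the (hi i))) ` {..<m}"]) force+
  ultimately have "finite P"
    unfolding P_def using assms(2) by blast
  moreover have "\<forall>(u, v)\<in>P. far S u v"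
    using assms(4) sides by (auto simp: P_def)
  ultimately obtain d where d: "far S \<zero> d" and gaps: "\<forall>(u, v)\<in>P. u \<oplus> nmul S (Suc L) d \<preceq> v"
    using exists_radius[of P "Suc L"] assms(3) by (auto simp: P_def)
  have "\<forall>i<m. \<forall>e. lo i = Some e \<longrightarrow> e \<oplus> nmul S (Suc L) d \<preceq> p ! i"
    and "\<forall>i<m. \<forall>e. hi i = Some e \<longrightarrow> p ! i \<oplus> nmul S (Suc L) d \<preceq> e"
    using gaps unfolding P_def by blast+
  then have "radius_box S d p N c \<subseteq> X"
    unfolding X using d p by (intro radius_box_subset_boxset)
  moreover have "box S m p (radius_box S d p N c)"
    using box_radius_box[OF d] sides p by (auto simp: bset_def)
  moreover have "\<forall>(u, v)\<in>Q. u \<oplus> nmul S (Suc L) d \<preceq> v"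
    using gaps unfolding P_def by blast
  ultimately show ?thesis
    using d by blast
qed

lemma lipschitz_at_const: "lipschitz_at S C p (\<lambda>_. e) 0"
  by (simp add: lipschitz_at_def center_in_closed_ball ple_refl)

lemma below_lipschitz_bound:
  assumes "lipschitz_at S C p f L" and "x \<in> C" and "x \<in> radius_box S d p N c" and "far S \<zero> d"
    and "f p \<oplus> nmul S (Suc (L + L')) d \<preceq> t" and "s \<in> closed_ball S t d"
  shows "f x \<preceq> s"
proof -
  have "f x \<in> closed_ball S (f p) (nmul S L d)"
    using assms(1,2) assms(3)[unfolded mem_radius_box] unfolding lipschitz_at_def by blast
  then have "f x \<preceq> f p \<oplus> nmul S L d"
    by (simp add: closed_ball_def icc_def)
  then show ?thesis
    using below_gap[OF far_imp_ple[OF assms(4)] assms(5)] assms(6) by (simp add: closed_ball_def icc_def)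
qed

lemma above_lipschitz_bound:
  assumes "lipschitz_at S C p f L" and "x \<in> C" and "x \<in> radius_box S d p N c" and "far S \<zero> d"
    and "t \<oplus> nmul S (Suc (L + L')) d \<preceq> f p" and "s \<in> closed_ball S t d"
  shows "s \<preceq> f x"
proof -
  have "f x \<in> closed_ball S (f p) (nmul S L d)"
    using assms(1,2) assms(3)[unfolded mem_radius_box] unfolding lipschitz_at_def by blast
  then have "f p \<ominus> nmul S L d \<preceq> f x"
    by (simp add: closed_ball_def icc_def)
  then show ?thesis
    using above_gap[OF far_imp_ple[OF assms(4)] assms(5)] assms(6) by (simp add: closed_ball_def icc_def)
qed

lemma box_shrink_generic:
  assumes box: "box S m p X"
    and lo: "\<And>\<alpha>. lo = Some \<alpha> \<Longrightarrow> \<alpha> p \<in> dcl S E" and hi: "\<And>\<beta>. hi = Some \<beta> \<Longrightarrow> \<beta> p \<in> dcl S E"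
    and generic: "t \<notin> dcl S E"
    and t: "lowok S (map_option (\<lambda>\<alpha>. \<alpha> p) lo) t" "upok S (map_option (\<lambda>\<beta>. \<beta> p) hi) t"
  shows "\<exists>d N c. far S \<zero> d \<and> (\<forall>\<alpha>. lo = Some \<alpha> \<longrightarrow> \<alpha> p \<oplus> nmul S (Suc L) d \<preceq> t) \<and>
    (\<forall>\<beta>. hi = Some \<beta> \<longrightarrow> t \<oplus> nmul S (Suc L) d \<preceq> \<beta> p) \<and>
    box S m p (radius_box S d p N c) \<and> radius_box S d p N c \<subseteq> X"
proof -
  \<comment> \<open>the pair of \<open>\<zero>\<close> and \<open>t\<close> only serves to make \<open>Q\<close> nonempty\<close>
  define Q where "Q = {(\<alpha> p, t) |\<alpha>. lo = Some \<alpha>} \<union> {(t, \<beta> p) |\<beta>. hi = Some \<beta>} \<union>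
    {if \<zero> \<preceq> t then (\<zero>, t) else (t, \<zero>)}"
  have "finite Q"
    unfolding Q_def by (rule finite_UnI)+ (auto intro: finite_subset[of _ "(\<lambda>f. (f p, t)) ` set_option lo"]
        finite_subset[of _ "(\<lambda>f. (t, f p)) ` set_option hi"])
  moreover have "\<zero> \<in> dcl S E"
    using dcl_const[of S 0 E] by (simp add: const_def)
  then have "case (if \<zero> \<preceq> t then (\<zero>, t) else (t, \<zero>)) of (u, v) \<Rightarrow> far S u v"
    using far_above_dcl far_below_dcl generic ple_or_pless[of "\<zero>" t] by (auto simp: ple_def)
  then have "\<forall>(u, v)\<in>Q. far S u v"
    using lo hi generic t far_above_dcl far_below_dcl by (auto simp: Q_def lowok_def upok_def)
  ultimately show ?thesis
    using box_shrink[OF box, of Q L] unfolding Q_def by blast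
qed

lemma box_extend:
  assumes box: "box S m p X" and "X \<subseteq> C"
    and lo: "\<And>\<alpha>. lo = Some \<alpha> \<Longrightarrow> \<alpha> p \<in> dcl S E \<and> lipschitz_at S C p \<alpha> La"
    and hi: "\<And>\<beta>. hi = Some \<beta> \<Longrightarrow> \<beta> p \<in> dcl S E \<and> lipschitz_at S C p \<beta> Lb"
    and generic: "t \<notin> dcl S E"
    and t: "lowok S (map_option (\<lambda>\<alpha>. \<alpha> p) lo) t" "upok S (map_option (\<lambda>\<beta>. \<beta> p) hi) t"
      "pcong S N t (const S c)" "c < N"
  shows "\<exists>Y. box S (Suc m) (p @ [t]) Y \<and> Y \<subseteq> {y. \<exists>x\<in>C. \<exists>s. y = x @ [s] \<and>
    lowok S (map_option (\<lambda>\<alpha>. \<alpha> x) lo) s \<and> upok S (map_option (\<lambda>\<beta>. \<beta> x) hi) s \<and> pcong S N s (const S c)}"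
    (is "\<exists>Y. _ \<and> Y \<subseteq> ?D")
proof -
  have "\<And>\<alpha>. lo = Some \<alpha> \<Longrightarrow> \<alpha> p \<in> dcl S E" and "\<And>\<beta>. hi = Some \<beta> \<Longrightarrow> \<beta> p \<in> dcl S E"
    using lo hi by blast+
  then obtain d N' c' where d: "far S \<zero> d"
    and lo_gap: "\<forall>\<alpha>. lo = Some \<alpha> \<longrightarrow> \<alpha> p \<oplus> nmul S (Suc (La + Lb)) d \<preceq> t"
    and hi_gap: "\<forall>\<beta>. hi = Some \<beta> \<longrightarrow> t \<oplus> nmul S (Suc (La + Lb)) d \<preceq> \<beta> p"
    and box': "box S m p (radius_box S d p N' c')" and inX: "radius_box S d p N' c' \<subseteq> X"
    using box_shrink_generic[OF box _ _ generic t(1,2), of "La + Lb"] by blast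
  have inC: "radius_box S d p N' c' \<subseteq> C"
    using inX \<open>X \<subseteq> C\<close> by blast
  define Y where "Y = {x @ [s] |x s. x \<in> radius_box S d p N' c' \<and> s \<in> bset S (Some (t \<ominus> d)) (Some (t \<oplus> d)) N c}"
  have "box S (Suc m) (p @ [t]) Y"
    unfolding Y_def using far_radius[OF d, of t] t(3)
    by (intro box_snoc[OF box' t(4)]) (auto simp: bset_def lowok_def upok_def closed_ball_def icc_def)
  moreover have "Y \<subseteq> ?D"
  proof
    fix y assume "y \<in> Y"
    then obtain x s where y: "y = x @ [s]" and x: "x \<in> radius_box S d p N' c'" and s: "s \<in> closed_ball S t d"
      and cong: "pcong S N s (const S c)"
      by (auto simp: Y_def bset_def lowok_def upok_def closed_ball_def icc_def)
    have "\<alpha> x \<preceq> s" if "lo = Some \<alpha>" for \<alpha>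
      using below_lipschitz_bound[OF conjunct2[OF lo[OF that]] subsetD[OF inC x] x d _ s] lo_gap that
      by blast
    moreover have "s \<preceq> \<beta> x" if "hi = Some \<beta>" for \<beta>
      using above_lipschitz_bound[OF conjunct2[OF hi[OF that]] subsetD[OF inC x] x d _ s] hi_gap that
      by (simp add: add.commute)
    ultimately show "y \<in> ?D"
      using y x inC cong by (auto simp: lowok_def upok_def split: option.split)
  qed
  ultimately show ?thesis
    by blast
qed

section \<open>Linear functions\<close>

lemma nmul_divk:
  assumes "0 < k" and "pcong S k x (const S c)"
  shows "nmul S k (divk S k (x \<ominus> const S c)) = x \<ominus> const S c"
proof -
  obtain w where w: "nmul S k w = x \<ominus> const S c"
    using pcong_imp_nmul assms(2) by blast
  show ?thesis
    unfolding divk_def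
  proof (rule theI)
    fix y assume "nmul S k y = x \<ominus> const S c"
    with w have "nmul S k y = nmul S k w"
      by simp
    then show "y = w"
      by (rule nmul_inject[OF assms(1)])
  qed (fact w)
qed

lemma blin_decompose:
  assumes "blin S B C f"
  obtains s k c \<gamma> where "\<gamma> \<in> dcl S B" and "\<forall>i. 0 < k i"
    and "\<And>x i. x \<in> C \<Longrightarrow> i < length x \<Longrightarrow>
      nmul S (k i) (divk S (k i) (x ! i \<ominus> const S (c i))) = x ! i \<ominus> const S (c i)"
    and "\<And>x. x \<in> C \<Longrightarrow>
      f x = foldr (padd S) (map (\<lambda>i. zmul S (s i) (divk S (k i) (x ! i \<ominus> const S (c i)))) [0..<length x]) \<gamma>"
proof -
  obtain s k c \<gamma> where b: "\<gamma> \<in> dcl S B" "\<forall>i. c i < k i"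
    "\<forall>x\<in>C. \<forall>i<length x. pcong S (k i) (x ! i) (const S (c i))"
    "\<forall>x\<in>C. f x = foldr (padd S)
        (map (\<lambda>i. zmul S (s i) (divk S (k i) (x ! i \<ominus> const S (c i)))) [0..<length x]) \<gamma>"
    using assms unfolding blin_def by blast
  have k: "\<forall>i. 0 < k i"
    using b(2) by (metis gr_zeroI not_less_zero)
  show ?thesis
    by (rule that[OF b(1) k]) (simp_all add: b(3,4) nmul_divk k)
qed

lemma blin_in_dcl:
  assumes "blin S B C f" and "x \<in> C" and "B \<subseteq> E" and "set x \<subseteq> dcl S E"
  shows "f x \<in> dcl S E"
proof -
  obtain s k c \<gamma> where \<gamma>: "\<gamma> \<in> dcl S B" and k: "\<forall>i. 0 < k i"
    and quot: "\<And>x i. x \<in> C \<Longrightarrow> i < length x \<Longrightarrow>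
      nmul S (k i) (divk S (k i) (x ! i \<ominus> const S (c i))) = x ! i \<ominus> const S (c i)"
    and f: "\<And>x. x \<in> C \<Longrightarrow> f x = foldr (padd S)
      (map (\<lambda>i. zmul S (s i) (divk S (k i) (x ! i \<ominus> const S (c i)))) [0..<length x]) \<gamma>"
    by (rule blin_decompose[OF assms(1)]) blast
  have "divk S (k i) (x ! i \<ominus> const S (c i)) \<in> dcl S E" if "i < length x" for i
    using dcl_nmul_cancel[OF k[rule_format]] quot[OF assms(2) that] dcl_diff dcl_const assms(4) that
    by (metis nth_mem subsetD)
  moreover have "\<gamma> \<in> dcl S E"
    using \<gamma> dcl_mono[OF assms(3)] by blast
  ultimately show ?thesis
    unfolding f[OF assms(2)] by (intro dcl_foldr_add) (auto intro: dcl_zmul)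
qed

lemma closed_ball_foldr_add:
  "(\<forall>i\<in>set l. g i \<in> closed_ball S (h i) (e i)) \<Longrightarrow>
    foldr (padd S) (map g l) \<gamma> \<in> closed_ball S (foldr (padd S) (map h l) \<gamma>) (foldr (padd S) (map e l) \<zero>)"
  by (induction l) (simp_all add: closed_ball_add center_in_closed_ball ple_refl)

lemma foldr_nmul: "foldr (padd S) (map (\<lambda>i. nmul S (h i) d) l) \<zero> = nmul S (sum_list (map h l)) d"
  by (induction l) (auto simp: nmul_add)

lemma blin_lipschitz:
  assumes "blin S B C f" and "p \<in> C" and "\<forall>x\<in>C. length x = length p"
  shows "\<exists>L. lipschitz_at S C p f L"
proof -
  obtain s k c \<gamma> where k: "\<forall>i. 0 < k i"
    and quot: "\<And>x i. x \<in> C \<Longrightarrow> i < length x \<Longrightarrow>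
      nmul S (k i) (divk S (k i) (x ! i \<ominus> const S (c i))) = x ! i \<ominus> const S (c i)"
    and f: "\<And>x. x \<in> C \<Longrightarrow> f x = foldr (padd S)
      (map (\<lambda>i. zmul S (s i) (divk S (k i) (x ! i \<ominus> const S (c i)))) [0..<length x]) \<gamma>"
    by (rule blin_decompose[OF assms(1)]) blast
  define w where "w x i = divk S (k i) (x ! i \<ominus> const S (c i))" for x i
  define L where "L = sum_list (map (\<lambda>i. nat \<bar>s i\<bar>) [0..<length p])"
  have "f x \<in> closed_ball S (f p) (nmul S L d)"
    if x: "x \<in> C" and near: "\<forall>i<length p. x ! i \<in> closed_ball S (p ! i) d" for x d
  proof -
    have "\<forall>i\<in>set [0..<length p]. zmul S (s i) (w x i) \<in> closed_ball S (zmul S (s i) (w p i)) (nmul S (nat \<bar>s i\<bar>) d)"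
    proof
      fix i assume "i \<in> set [0..<length p]"
      then have i: "i < length x" "i < length p"
        using assms(3) x by auto
      show "zmul S (s i) (w x i) \<in> closed_ball S (zmul S (s i) (w p i)) (nmul S (nat \<bar>s i\<bar>) d)"
        unfolding w_def
        by (rule zmul_quotient_closed_ball[OF k[rule_format] quot[OF x i(1)] quot[OF assms(2) i(2)]])
          (use near i(2) in simp)
    qed
    from closed_ball_foldr_add[OF this, of \<gamma>] show ?thesis
      using f[OF x] f[OF assms(2)] assms(3) x by (simp add: w_def L_def foldr_nmul)
  qed
  then show ?thesis
    unfolding lipschitz_at_def by blast
qed

section \<open>Boxes inside cells\<close>

lemma box_in_interval_cell:
  assumes "\<forall>e. lo = Some e \<longrightarrow> e \<in> dcl S M0" and "\<forall>e. hi = Some e \<longrightarrow> e \<in> dcl S M0" and "c < N"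
    and "X = {t. lowok S lo t \<and> upok S hi t \<and> pcong S N t (const S c)}"
    and "t \<in> X" and "t \<notin> dcl S M0"
  shows "\<exists>Y. box S 1 [t] Y \<and> Y \<subseteq> (\<lambda>t. [t]) ` X"
proof -
  let ?lo = "map_option (\<lambda>e (_ :: 'a list). e) lo" and ?hi = "map_option (\<lambda>e (_ :: 'a list). e) hi"
  have "\<exists>Y. box S (Suc 0) ([] @ [t]) Y \<and> Y \<subseteq> {y. \<exists>x\<in>{[]}. \<exists>s. y = x @ [s] \<and>
      lowok S (map_option (\<lambda>\<alpha>. \<alpha> x) ?lo) s \<and> upok S (map_option (\<lambda>\<beta>. \<beta> x) ?hi) s \<and> pcong S N s (const S c)}"
    using assms
    by (intro box_extend[OF box_Nil order_refl, where E = M0 and La = 0 and Lb = 0])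
      (auto simp: lipschitz_at_const option.map_comp comp_def option.map_ident)
  moreover have "{y. \<exists>x\<in>{[]}. \<exists>s. y = x @ [s] \<and> lowok S (map_option (\<lambda>\<alpha>. \<alpha> x) ?lo) s \<and>
      upok S (map_option (\<lambda>\<beta>. \<beta> x) ?hi) s \<and> pcong S N s (const S c)} = (\<lambda>t. [t]) ` X"
    using assms(4) by (auto simp: option.map_comp comp_def option.map_ident)
  ultimately show ?thesis
    by simp
qed

lemma box_extend_blin:
  assumes "box S (length p) p X" and "X \<subseteq> C" and "p \<in> C" and "\<forall>x\<in>C. length x = length p"
    and "\<forall>\<alpha>. lo = Some \<alpha> \<longrightarrow> blin S M0 C \<alpha>" and "\<forall>\<beta>. hi = Some \<beta> \<longrightarrow> blin S M0 C \<beta>"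
    and "t \<notin> dcl S (M0 \<union> set p)"
    and "lowok S (map_option (\<lambda>\<alpha>. \<alpha> p) lo) t" and "upok S (map_option (\<lambda>\<beta>. \<beta> p) hi) t"
    and "pcong S N t (const S c)" and "c < N"
  shows "\<exists>Y. box S (Suc (length p)) (p @ [t]) Y \<and> Y \<subseteq> {y. \<exists>x\<in>C. \<exists>s. y = x @ [s] \<and>
    lowok S (map_option (\<lambda>\<alpha>. \<alpha> x) lo) s \<and> upok S (map_option (\<lambda>\<beta>. \<beta> x) hi) s \<and> pcong S N s (const S c)}"
proof -
  obtain La where La: "\<And>\<alpha>. lo = Some \<alpha> \<Longrightarrow> lipschitz_at S C p \<alpha> La"
    using blin_lipschitz[OF _ assms(3,4)] assms(5) by (cases lo) auto
  obtain Lb where Lb: "\<And>\<beta>. hi = Some \<beta> \<Longrightarrow> lipschitz_at S C p \<beta> Lb"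
    using blin_lipschitz[OF _ assms(3,4)] assms(6) by (cases hi) auto
  have "f p \<in> dcl S (M0 \<union> set p)" if "blin S M0 C f" for f
    using blin_in_dcl[OF that assms(3)] by (auto intro: dcl_base)
  then show ?thesis
    using assms(1,2,5-11) La Lb by (intro box_extend[where E = "M0 \<union> set p"]) auto
qed

lemma box_in_cell:
  assumes "cell S M0 ty C" and "sum_list ty = length ty" and "a \<in> C" and "indep S M0 a {..<length a}"
  shows "\<exists>X. box S (length a) a X \<and> X \<subseteq> C"
  using assms
proof (induction arbitrary: a rule: cell.induct)
  case (c0 g)
  then show ?case by simp
next
  case (c1 lo hi c N X)
  then obtain t where "a = [t]" and "t \<in> X"
    by auto
  moreover have "t \<notin> dcl S M0"
    using indep_snoc(2)[of S M0 "[]" t] c1.prems(3) \<open>a = [t]\<close> by simp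
  ultimately show ?case
    using box_in_interval_cell[OF c1.hyps(1-4)] by simp
next
  case (cgraph ty C f)
  then show ?case
    using cell_sum_le_length[OF cgraph.hyps(1)] by simp
next
  case (cint ty C lo hi c N D)
  obtain p t where a: "a = p @ [t]" and p: "p \<in> C" and t: "lowok S (map_option (\<lambda>\<alpha>. \<alpha> p) lo) t"
    "upok S (map_option (\<lambda>\<beta>. \<beta> p) hi) t" "pcong S N t (const S c)"
    using cint.prems(2) cint.hyps(5) by blast
  have indep: "indep S M0 p {..<length p}" and generic: "t \<notin> dcl S (M0 \<union> set p)"
    using indep_snoc[of S M0 p t] cint.prems(3) a by simp_all
  have "sum_list ty = length ty"
    using cint.prems(1) by simp
  then obtain X where "box S (length p) p X" "X \<subseteq> C"
    using cint.IH p indep by blast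
  moreover have "\<forall>x\<in>C. length x = length p"
    using cell_length[OF cint.hyps(1)] p by metis
  ultimately show ?case
    unfolding a cint.hyps(5)
    using box_extend_blin[OF _ _ p _ cint.hyps(2,3) generic t cint.hyps(4)] by simp
qed

end

theorem lemma3p4:
  fixes S :: "'a pstr" and M0 :: "'a set" and C :: "'a list set"
    and ty :: "nat list" and a :: "'a list" and n :: nat
  assumes "models_PrA S" and "saturated S"
    and "elem_sub S M0" and "small M0"
    and "cell S M0 ty C" and "length ty = n" and "sum_list ty = n"
    and "a \<in> C" and "dimo S M0 a = n"
  shows "\<exists>X. box S n a X \<and> X \<subseteq> C"
proof -
  interpret presburger_model S
    using assms(1) by unfold_locales
  have "length a = n"
    using cell_length[OF assms(5,8)] assms(6) by simp
  then show ?thesis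
    using box_in_cell[OF assms(5) _ assms(8)] indep_of_dimo[of S M0 a] assms(6,7,9) by simp
qed

end
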